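(* Let $\mathcal F$ be a set of oriented trees which is a complete set of obstructions for a digraph $H$. Then $\mathrm{Sproink}(\mathcal F)=\bigcup_{T\in\mathcal F}\mathrm{Sproink}(T)$ is a complete set of obstructions for the arc graph $\delta H$.
   Context: Digraphs are finite, $G=(V,A)$ with $A\subseteq V\times V$; homomorphisms are arc-preserving vertex maps, $G\to H$ means one exists. A set $\mathcal F$ of digraphs is a complete set of obstructions for $H$ if for every digraph $G$: $G\to H$ iff no $F\in\mathcal F$ satisfies $F\to G$. An oriented tree is a digraph whose underlying undirected graph is a tree. The arc graph of $G=(V,A)$ is $\delta G=(A,\delta A)$ with $\delta A=\{((u,v),(v,w)) : (u,v),(v,w)\in A\}$. A tree $F$ has height at most one if its vertex set is partitioned into two sets $0_F,1_F$ such that every arc $(x,y)$ of $F$ has $x\in 0_F$, $y\in 1_F$ (if $F$ has no arcs, it is a single vertex lying in one of the two sets). Sproinks: let $T$ be an oriented tree. For every vertex $u$ of $T$ choose a tree $F(u)$ of height at most one (with a partition $0_{F(u)},1_{F(u)}$), the $F(u)$ pairwise disjoint. For every arc $e$ of $T$ incident with $u$ fix a vertex $v(e,F(u))$ of $F(u)$ with $v(e,F(u))\in 1_{F(u)}$ if $u$ is the initial vertex of $e$ and $v(e,F(u))\in 0_{F(u)}$ if $u$ is the terminal vertex of $e$. The tree obtained from the disjoint union of all $F(u)$ by identifying $v(e,F(u))$ with $v(e,F(u'))$ for every arc $e=(u,u')$ of $T$ is a sproink of $T$; $\mathrm{Sproink}(T)$ is the set of all sproinks of $T$. *)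

theory Defs
  imports Main
begin

type_synonym 'a digraph = "'a set \<times> ('a \<times> 'a) set"

abbreviation verts :: "'a digraph \<Rightarrow> 'a set" where "verts G \<equiv> fst G"
abbreviation arcs :: "'a digraph \<Rightarrow> ('a \<times> 'a) set" where "arcs G \<equiv> snd G"

definition digraph :: "'a digraph \<Rightarrow> bool" where
  "digraph G \<longleftrightarrow> finite (verts G) \<and> arcs G \<subseteq> verts G \<times> verts G"

definition is_hom :: "'a digraph \<Rightarrow> 'b digraph \<Rightarrow> ('a \<Rightarrow> 'b) \<Rightarrow> bool" where
  "is_hom G H f \<longleftrightarrow> (\<forall>x\<in>verts G. f x \<in> verts H) \<and>
                     (\<forall>(x,y)\<in>arcs G. (f x, f y) \<in> arcs H)"

definition hom_to :: "'a digraph \<Rightarrow> 'b digraph \<Rightarrow> bool" (infix "\<rightarrow>\<^sub>h" 50) where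
  "G \<rightarrow>\<^sub>h H \<longleftrightarrow> (\<exists>f. is_hom G H f)"

text \<open>The test digraphs G range over digraphs with
  vertices in nat; every finite digraph is isomorphic to such a one and the
  relation \<open>\<rightarrow>\<^sub>h\<close> is invariant under isomorphism.\<close>
definition complete_obstructions :: "'f digraph set \<Rightarrow> 'h digraph \<Rightarrow> bool" where
  "complete_obstructions \<F> H \<longleftrightarrow>
     (\<forall>G :: nat digraph. digraph G \<longrightarrow> (G \<rightarrow>\<^sub>h H \<longleftrightarrow> \<not> (\<exists>F\<in>\<F>. F \<rightarrow>\<^sub>h G)))"

definition oriented_tree :: "'a digraph \<Rightarrow> bool" where
  "oriented_tree T \<longleftrightarrow> digraph T \<and> verts T \<noteq> {} \<and>
     (\<forall>(x,y)\<in>arcs T. x \<noteq> y \<and> (y,x) \<notin> arcs T) \<and>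
     (\<forall>x\<in>verts T. \<forall>y\<in>verts T. (x,y) \<in> (arcs T \<union> (arcs T)\<inverse>)\<^sup>*) \<and>
     card (arcs T) + 1 = card (verts T)"

definition arc_graph :: "'a digraph \<Rightarrow> ('a \<times> 'a) digraph" where
  "arc_graph G = (arcs G, {(a, b). a \<in> arcs G \<and> b \<in> arcs G \<and> snd a = fst b})"

text \<open>Tree of height at most one w.r.t. the partition (Z, verts F - Z):
  Z is the part 0_F, its complement in verts F is 1_F.\<close>
definition height_le_one :: "'a digraph \<Rightarrow> 'a set \<Rightarrow> bool" where
  "height_le_one F Z \<longleftrightarrow> oriented_tree F \<and> Z \<subseteq> verts F \<and>
     (\<forall>(x,y)\<in>arcs F. x \<in> Z \<and> y \<in> verts F - Z)"

text \<open>Sproink data for an oriented tree T: for each vertex u a tree Fu u of height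
  at most one (with 0-part Z u), and for each arc e and endpoint u of e a vertex
  vsel e u of Fu u.  The F(u) are made pairwise disjoint by tagging with u.\<close>
definition sproink_data ::
  "'t digraph \<Rightarrow> ('t \<Rightarrow> nat digraph) \<Rightarrow> ('t \<Rightarrow> nat set) \<Rightarrow> ('t \<times> 't \<Rightarrow> 't \<Rightarrow> nat) \<Rightarrow> bool" where
  "sproink_data T Fu Z vsel \<longleftrightarrow>
     (\<forall>u\<in>verts T. height_le_one (Fu u) (Z u)) \<and>
     (\<forall>e\<in>arcs T. vsel e (fst e) \<in> verts (Fu (fst e)) - Z (fst e) \<and>
                 vsel e (snd e) \<in> Z (snd e))"

definition sproink_ident ::
  "'t digraph \<Rightarrow> ('t \<times> 't \<Rightarrow> 't \<Rightarrow> nat) \<Rightarrow> (('t \<times> nat) \<times> ('t \<times> nat)) set" where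
  "sproink_ident T vsel =
     (let R = {((fst e, vsel e (fst e)), (snd e, vsel e (snd e))) | e. e \<in> arcs T}
      in (R \<union> R\<inverse>)\<^sup>*)"

definition sproink_graph ::
  "'t digraph \<Rightarrow> ('t \<Rightarrow> nat digraph) \<Rightarrow> ('t \<times> 't \<Rightarrow> 't \<Rightarrow> nat) \<Rightarrow> ('t \<times> nat) set digraph" where
  "sproink_graph T Fu vsel =
     (let E = sproink_ident T vsel in
      ({E `` {(u, x)} | u x. u \<in> verts T \<and> x \<in> verts (Fu u)},
       {(E `` {(u, x)}, E `` {(u, y)}) | u x y. u \<in> verts T \<and> (x, y) \<in> arcs (Fu u)}))"

definition Sproink :: "'t digraph \<Rightarrow> ('t \<times> nat) set digraph set" where
  "Sproink T = {sproink_graph T Fu vsel | Fu Z vsel. sproink_data T Fu Z vsel}"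

end

theory Submission
  imports Defs
begin

(* The arc-graph functor G \<mapsto> \<delta>G has a left adjoint, the end graph: every
   vertex v of G is split into a tail end (v,False) and a head end (v,True),
   joined by an arc, and for every arc (v,w) of G the head end of v is glued
   to the tail end of w.  Hence G \<rightarrow> \<delta>H iff end_graph G \<rightarrow> H.

   The second ingredient says that for a loopless T, T \<rightarrow> end_graph G
   iff some sproink of T maps to G: a map of a sproink into G is the same as
   a family of maps F(u) \<rightarrow> G agreeing at glued vertices, the ends met by the
   image of a height-one tree F(u) lie in one glued class, and conversely any
   finitely many ends in one glued class are met by a height-one tree mapping
   to G, grown leaf by leaf along the gluing relation.

   The theorem then chains the
   two equivalences with the obstruction property of \<F>, after relabelling
   the end graph injectively by natural numbers. *)

lemma is_hom_vert: "is_hom G H f \<Longrightarrow> x \<in> verts G \<Longrightarrow> f x \<in> verts H"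
  unfolding is_hom_def by blast

lemma is_hom_arc: "is_hom G H f \<Longrightarrow> (x, y) \<in> arcs G \<Longrightarrow> (f x, f y) \<in> arcs H"
  unfolding is_hom_def by blast

lemma equiv_sym_closure: "equiv UNIV ((A \<union> A\<inverse>)\<^sup>*)"
  unfolding equiv_def by (simp add: refl_rtrancl sym_rtrancl sym_Un_converse trans_rtrancl)

lemma sym_closure_class_eq:
  "(a, b) \<in> (A \<union> A\<inverse>)\<^sup>* \<Longrightarrow> (A \<union> A\<inverse>)\<^sup>* `` {a} = (A \<union> A\<inverse>)\<^sup>* `` {b}"
  by (rule equiv_class_eq[OF equiv_sym_closure])

lemma sym_closure_invariant:
  assumes "\<And>a b. (a, b) \<in> A \<Longrightarrow> f a = f b" and "(x, y) \<in> (A \<union> A\<inverse>)\<^sup>*"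
  shows "f x = f y"
  using assms(2) by (induction rule: rtrancl_induct) (auto dest: assms(1))

lemma sym_closure_map:
  assumes "\<And>a b. (a, b) \<in> A \<Longrightarrow> (f a, f b) \<in> B" and "(x, y) \<in> (A \<union> A\<inverse>)\<^sup>*"
  shows "(f x, f y) \<in> (B \<union> B\<inverse>)\<^sup>*"
  using assms(2)
proof (induction rule: rtrancl_induct)
  case (step y z)
  then have "(f y, f z) \<in> B \<union> B\<inverse>" using assms(1) by auto
  then show ?case using step.IH by (rule rtrancl_into_rtrancl[rotated])
qed simp

lemma the_elem_image_class:
  assumes "\<And>a b. (a, b) \<in> A \<Longrightarrow> f a = f b"
  shows "the_elem (f ` ((A \<union> A\<inverse>)\<^sup>* `` {x})) = f x"
proof -
  have "f ` ((A \<union> A\<inverse>)\<^sup>* `` {x}) = {f x}"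
    using sym_closure_invariant[OF assms] by force
  then show ?thesis by simp
qed

text \<open>The obstruction property only speaks
  about digraphs on \<open>nat\<close>, so it is applied to a relabelled copy.\<close>

definition relabel :: "('a \<Rightarrow> 'b) \<Rightarrow> 'a digraph \<Rightarrow> 'b digraph" where
  "relabel f G = (f ` verts G, map_prod f f ` arcs G)"

lemma relabel_digraph: "digraph G \<Longrightarrow> digraph (relabel f G)"
  unfolding digraph_def relabel_def by auto

lemma hom_to_relabel_iff:
  assumes G: "digraph G" and f: "inj_on f (verts G)"
  shows "X \<rightarrow>\<^sub>h relabel f G \<longleftrightarrow> X \<rightarrow>\<^sub>h G"
proof
  assume "X \<rightarrow>\<^sub>h relabel f G"
  then obtain k where k: "is_hom X (relabel f G) k" unfolding hom_to_def by blast
  let ?g = "inv_into (verts G) f \<circ> k"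
  have "is_hom X G ?g"
    unfolding is_hom_def
  proof safe
    fix x assume "x \<in> verts X"
    then have "k x \<in> f ` verts G" using k unfolding is_hom_def relabel_def by auto
    then show "?g x \<in> verts G" by (auto intro: inv_into_into)
  next
    fix a b assume "(a, b) \<in> arcs X"
    then have "(k a, k b) \<in> map_prod f f ` arcs G" using k unfolding is_hom_def relabel_def by auto
    then obtain c d where cd: "(c, d) \<in> arcs G" "k a = f c" "k b = f d" by auto
    then have "c \<in> verts G" "d \<in> verts G" using G unfolding digraph_def by auto
    then show "(?g a, ?g b) \<in> arcs G" using cd f by simp
  qed
  then show "X \<rightarrow>\<^sub>h G" unfolding hom_to_def by blast
next
  assume "X \<rightarrow>\<^sub>h G"
  then obtain k where "is_hom X G k" unfolding hom_to_def by blast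
  then have "is_hom X (relabel f G) (f \<circ> k)" unfolding is_hom_def relabel_def by force
  then show "X \<rightarrow>\<^sub>h relabel f G" unfolding hom_to_def by blast
qed

lemma relabel_hom_to_iff:
  assumes G: "digraph G" and f: "inj_on f (verts G)"
  shows "relabel f G \<rightarrow>\<^sub>h H \<longleftrightarrow> G \<rightarrow>\<^sub>h H"
proof
  assume "relabel f G \<rightarrow>\<^sub>h H"
  then obtain k where "is_hom (relabel f G) H k" unfolding hom_to_def by blast
  then have "is_hom G H (k \<circ> f)" unfolding is_hom_def relabel_def by force
  then show "G \<rightarrow>\<^sub>h H" unfolding hom_to_def by blast
next
  assume "G \<rightarrow>\<^sub>h H"
  then obtain k where "is_hom G H k" unfolding hom_to_def by blast
  then have "is_hom (relabel f G) H (k \<circ> inv_into (verts G) f)"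
    using G f unfolding is_hom_def relabel_def digraph_def by fastforce
  then show "relabel f G \<rightarrow>\<^sub>h H" unfolding hom_to_def by blast
qed

definition end_link :: "'a digraph \<Rightarrow> (('a \<times> bool) \<times> ('a \<times> bool)) set" where
  "end_link G = {((v, True), (w, False)) | v w. (v, w) \<in> arcs G}"

abbreviation end_equiv :: "'a digraph \<Rightarrow> (('a \<times> bool) \<times> ('a \<times> bool)) set" where
  "end_equiv G \<equiv> (end_link G \<union> (end_link G)\<inverse>)\<^sup>*"

definition end_graph :: "'a digraph \<Rightarrow> ('a \<times> bool) set digraph" where
  "end_graph G = ({end_equiv G `` {(v, i)} | v i. v \<in> verts G},
                  {(end_equiv G `` {(v, False)}, end_equiv G `` {(v, True)}) | v. v \<in> verts G})"

lemma end_graph_digraph: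
  assumes "digraph G" shows "digraph (end_graph G)"
proof -
  have "verts (end_graph G) = (\<lambda>(v, i). end_equiv G `` {(v, i)}) ` (verts G \<times> UNIV)"
    unfolding end_graph_def by auto
  then have "finite (verts (end_graph G))" using assms unfolding digraph_def by simp
  then show ?thesis unfolding digraph_def end_graph_def by auto
qed

lemma arc_graph_adjunction:
  assumes H: "digraph H" and G: "digraph G"
  shows "G \<rightarrow>\<^sub>h arc_graph H \<longleftrightarrow> end_graph G \<rightarrow>\<^sub>h H"
proof
  assume "G \<rightarrow>\<^sub>h arc_graph H"
  then obtain f where f: "is_hom G (arc_graph H) f" unfolding hom_to_def by blast
  define \<kappa> where "\<kappa> p = (if snd p then snd (f (fst p)) else fst (f (fst p)))" for p
  have \<kappa>_link: "\<kappa> a = \<kappa> b" if "(a, b) \<in> end_link G" for a b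
    using that f unfolding end_link_def \<kappa>_def is_hom_def arc_graph_def by auto
  define k where "k C = the_elem (\<kappa> ` C)" for C
  have k_class: "k (end_equiv G `` {p}) = \<kappa> p" for p
    unfolding k_def using \<kappa>_link by (rule the_elem_image_class)
  have f_arc: "f v \<in> arcs H" if "v \<in> verts G" for v
    using f that unfolding is_hom_def arc_graph_def by auto
  then have f_ends: "fst (f v) \<in> verts H \<and> snd (f v) \<in> verts H" if "v \<in> verts G" for v
    using H that unfolding digraph_def by (metis mem_Sigma_iff prod.collapse subsetD)
  have "is_hom (end_graph G) H k"
    using f_arc f_ends unfolding is_hom_def end_graph_def by (auto simp: k_class \<kappa>_def)
  then show "end_graph G \<rightarrow>\<^sub>h H" unfolding hom_to_def by blast
next
  assume "end_graph G \<rightarrow>\<^sub>h H"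
  then obtain k where k: "is_hom (end_graph G) H k" unfolding hom_to_def by blast
  define f where "f v = (k (end_equiv G `` {(v, False)}), k (end_equiv G `` {(v, True)}))" for v
  have f_arc: "f v \<in> arcs H" if "v \<in> verts G" for v
    using k that unfolding is_hom_def f_def end_graph_def by auto
  have f_link: "snd (f v) = fst (f w)" if "(v, w) \<in> arcs G" for v w
  proof -
    have "((v, True), (w, False)) \<in> end_equiv G" using that unfolding end_link_def by auto
    then show ?thesis unfolding f_def by (simp add: sym_closure_class_eq)
  qed
  have "is_hom G (arc_graph H) f"
    using f_arc f_link G unfolding is_hom_def arc_graph_def digraph_def by auto
  then show "G \<rightarrow>\<^sub>h arc_graph H" unfolding hom_to_def by blast
qed

text \<open>A map \<open>\<phi>\<close> of a height-one tree with 0-part \<open>Z\<close> into \<open>G\<close> meets at the vertex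
  \<open>x\<close> the head end of \<open>\<phi> x\<close> if \<open>x\<close> is a source (in \<open>Z\<close>), and its tail end otherwise.\<close>
definition end_of :: "('a \<Rightarrow> 'b) \<Rightarrow> 'a set \<Rightarrow> 'a \<Rightarrow> 'b \<times> bool" where
  "end_of \<phi> Z x = (\<phi> x, x \<in> Z)"

text \<open>All ends met by a height-one tree lie in one class: its arcs become links.\<close>
lemma height_one_ends_equiv:
  assumes F: "height_le_one F Z" and \<phi>: "is_hom F G \<phi>"
    and x: "x \<in> verts F" and y: "y \<in> verts F"
  shows "(end_of \<phi> Z x, end_of \<phi> Z y) \<in> end_equiv G"
proof -
  have "(x, y) \<in> (arcs F \<union> (arcs F)\<inverse>)\<^sup>*"
    using F x y unfolding height_le_one_def oriented_tree_def by auto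
  then show ?thesis
  proof (rule sym_closure_map[rotated])
    fix a b assume ab: "(a, b) \<in> arcs F"
    then have "a \<in> Z" "b \<notin> Z" using F unfolding height_le_one_def by auto
    then show "(end_of \<phi> Z a, end_of \<phi> Z b) \<in> end_link G"
      using ab \<phi> unfolding end_of_def end_link_def is_hom_def by auto
  qed
qed

lemma oriented_tree_add_leaf:
  assumes T: "oriented_tree T" and n: "n \<notin> verts T" and x: "x \<in> verts T"
    and a: "a = (x, n) \<or> a = (n, x)"
  shows "oriented_tree (insert n (verts T), insert a (arcs T))"
proof -
  have fin: "finite (verts T)" and sub: "arcs T \<subseteq> verts T \<times> verts T"
    using T unfolding oriented_tree_def digraph_def by auto
  then have "finite (arcs T)" using finite_subset by blast
  moreover have "a \<notin> arcs T" using a n sub by auto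
  ultimately have card: "card (insert a (arcs T)) + 1 = card (insert n (verts T))"
    using T fin n unfolding oriented_tree_def by simp
  let ?S = "(insert a (arcs T) \<union> (insert a (arcs T))\<inverse>)\<^sup>*"
  have old: "(y, z) \<in> ?S" if "y \<in> verts T" "z \<in> verts T" for y z
    using T that rtrancl_mono[of "arcs T \<union> (arcs T)\<inverse>" "insert a (arcs T) \<union> (insert a (arcs T))\<inverse>"]
    unfolding oriented_tree_def by blast
  have leaf: "(x, n) \<in> ?S" "(n, x) \<in> ?S" using a by auto
  have "(y, z) \<in> ?S" if "y \<in> insert n (verts T)" "z \<in> insert n (verts T)" for y z
    using that old[OF _ x] old[OF x] old leaf by (auto intro: rtrancl_trans)
  moreover have "\<forall>(y, z)\<in>insert a (arcs T). y \<noteq> z \<and> (z, y) \<notin> insert a (arcs T)"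
    using T a n x sub unfolding oriented_tree_def by fastforce
  ultimately show ?thesis using card fin sub a x unfolding oriented_tree_def digraph_def by auto
qed

lemma height_one_map_add_out_leaf:
  assumes F: "height_le_one F Z" "is_hom F G \<phi>" and x: "x \<in> Z" and n: "n \<notin> verts F"
    and G: "digraph G" and w: "(\<phi> x, w) \<in> arcs G"
  shows "height_le_one (insert n (verts F), insert (x, n) (arcs F)) Z \<and>
         is_hom (insert n (verts F), insert (x, n) (arcs F)) G (\<phi>(n := w))"
proof -
  have Z: "Z \<subseteq> verts F" and old: "\<And>a b. (a, b) \<in> arcs F \<Longrightarrow> a \<in> Z \<and> b \<in> verts F - Z"
    using F unfolding height_le_one_def by auto
  have \<phi>_arc: "\<And>a b. (a, b) \<in> arcs F \<Longrightarrow> (\<phi> a, \<phi> b) \<in> arcs G"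
    using F unfolding is_hom_def by auto
  have "oriented_tree (insert n (verts F), insert (x, n) (arcs F))"
    using F x Z n by (intro oriented_tree_add_leaf) (auto simp: height_le_one_def)
  then have "height_le_one (insert n (verts F), insert (x, n) (arcs F)) Z"
    using Z x n unfolding height_le_one_def by (auto dest: old)
  moreover have "w \<in> verts G" using G w unfolding digraph_def by auto
  then have "is_hom (insert n (verts F), insert (x, n) (arcs F)) G (\<phi>(n := w))"
    using F(2) \<phi>_arc Z x n w unfolding is_hom_def by (auto dest: old)
  ultimately show ?thesis ..
qed

lemma height_one_map_add_in_leaf:
  assumes F: "height_le_one F Z" "is_hom F G \<phi>" and x: "x \<in> verts F - Z" and n: "n \<notin> verts F"
    and G: "digraph G" and v: "(v, \<phi> x) \<in> arcs G"
  shows "height_le_one (insert n (verts F), insert (n, x) (arcs F)) (insert n Z) \<and>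
         is_hom (insert n (verts F), insert (n, x) (arcs F)) G (\<phi>(n := v))"
proof -
  have Z: "Z \<subseteq> verts F" and old: "\<And>a b. (a, b) \<in> arcs F \<Longrightarrow> a \<in> Z \<and> b \<in> verts F - Z"
    using F unfolding height_le_one_def by auto
  have \<phi>_arc: "\<And>a b. (a, b) \<in> arcs F \<Longrightarrow> (\<phi> a, \<phi> b) \<in> arcs G"
    using F unfolding is_hom_def by auto
  have "oriented_tree (insert n (verts F), insert (n, x) (arcs F))"
    using F x n by (intro oriented_tree_add_leaf) (auto simp: height_le_one_def)
  then have "height_le_one (insert n (verts F), insert (n, x) (arcs F)) (insert n Z)"
    using Z x n unfolding height_le_one_def by (auto dest: old)
  moreover have "v \<in> verts G" using G v unfolding digraph_def by auto
  then have "is_hom (insert n (verts F), insert (n, x) (arcs F)) G (\<phi>(n := v))"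
    using F(2) \<phi>_arc Z x n v unfolding is_hom_def by (auto dest: old)
  ultimately show ?thesis ..
qed

definition height_one_realisable :: "'a digraph \<Rightarrow> ('a \<times> bool) set \<Rightarrow> bool" where
  "height_one_realisable G Q \<longleftrightarrow>
     (\<exists>F :: nat digraph. \<exists>Z \<phi>. height_le_one F Z \<and> is_hom F G \<phi> \<and> Q \<subseteq> end_of \<phi> Z ` verts F)"

lemma height_one_realisable_subset:
  "height_one_realisable G Q \<Longrightarrow> Q' \<subseteq> Q \<Longrightarrow> height_one_realisable G Q'"
  unfolding height_one_realisable_def by blast

lemma height_one_realisable_single:
  assumes "v \<in> verts G" shows "height_one_realisable G {(v, i)}"
proof -
  define F :: "nat digraph" where "F = ({0}, {})"
  define Z where "Z = (if i then {0 :: nat} else {})"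
  have "oriented_tree F" unfolding oriented_tree_def digraph_def F_def by simp
  then have "height_le_one F Z" "is_hom F G (\<lambda>_. v)"
    using assms unfolding height_le_one_def is_hom_def F_def Z_def by auto
  moreover have "{(v, i)} \<subseteq> end_of (\<lambda>_. v) Z ` verts F" unfolding end_of_def F_def Z_def by simp
  ultimately show ?thesis unfolding height_one_realisable_def by blast
qed

lemma end_of_image_fresh_update:
  assumes n: "n \<notin> A" and Z': "Z' - {n} = Z - {n}"
  shows "end_of \<phi> Z ` A \<subseteq> end_of (\<phi>(n := w)) Z' ` insert n A"
proof
  fix e assume "e \<in> end_of \<phi> Z ` A"
  then obtain y where y: "y \<in> A" "e = end_of \<phi> Z y" by blast
  then have "y \<noteq> n" using n by blast
  then have "(y \<in> Z') = (y \<in> Z)" using Z' by blast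
  then have "e = end_of (\<phi>(n := w)) Z' y" using y(2) \<open>y \<noteq> n\<close> unfolding end_of_def by simp
  then show "e \<in> end_of (\<phi>(n := w)) Z' ` insert n A" using y(1) by blast
qed

lemma height_one_realisable_link:
  assumes G: "digraph G" and Q: "height_one_realisable G Q" and p: "p \<in> Q"
    and pq: "(p, q) \<in> end_link G \<union> (end_link G)\<inverse>"
  shows "height_one_realisable G (insert q Q)"
proof -
  obtain F :: "nat digraph" and Z \<phi> where F: "height_le_one F Z" "is_hom F G \<phi>"
    and Q_met: "Q \<subseteq> end_of \<phi> Z ` verts F"
    using Q unfolding height_one_realisable_def by blast
  have "finite (verts F)" using F unfolding height_le_one_def oriented_tree_def digraph_def by auto
  then obtain n :: nat where n: "n \<notin> verts F" using ex_new_if_finite infinite_UNIV_nat by blast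
  obtain x where x: "x \<in> verts F" "p = end_of \<phi> Z x" using p Q_met by blast
  have old_ends: "Q \<subseteq> end_of (\<phi>(n := w)) Z' ` insert n (verts F)"
    if "Z' - {n} = Z - {n}" for w Z'
    using Q_met end_of_image_fresh_update[OF n that] by (rule subset_trans)
  from pq consider
      v w where "p = (v, True)" "q = (w, False)" "(v, w) \<in> arcs G"
    | v w where "q = (v, True)" "p = (w, False)" "(v, w) \<in> arcs G"
    unfolding end_link_def by blast
  then show ?thesis
  proof cases
    case (1 v w)
    then have "x \<in> Z" "(\<phi> x, w) \<in> arcs G" using x unfolding end_of_def by auto
    from height_one_map_add_out_leaf[OF F this(1) n G this(2)]
    have "height_le_one (insert n (verts F), insert (x, n) (arcs F)) Z"
      "is_hom (insert n (verts F), insert (x, n) (arcs F)) G (\<phi>(n := w))" by auto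
    moreover have "q \<in> end_of (\<phi>(n := w)) Z ` insert n (verts F)"
      using 1 n F unfolding end_of_def height_le_one_def by auto
    then have "insert q Q \<subseteq> end_of (\<phi>(n := w)) Z ` insert n (verts F)"
      using old_ends[of Z w] by simp
    ultimately show ?thesis unfolding height_one_realisable_def
      by (intro exI[of _ "(insert n (verts F), insert (x, n) (arcs F))"] exI conjI) simp_all
  next
    case (2 v w)
    then have "x \<in> verts F - Z" "(v, \<phi> x) \<in> arcs G" using x unfolding end_of_def by auto
    from height_one_map_add_in_leaf[OF F this(1) n G this(2)]
    have "height_le_one (insert n (verts F), insert (n, x) (arcs F)) (insert n Z)"
      "is_hom (insert n (verts F), insert (n, x) (arcs F)) G (\<phi>(n := v))" by auto
    moreover have "q \<in> end_of (\<phi>(n := v)) (insert n Z) ` insert n (verts F)"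
      using 2 unfolding end_of_def by auto
    then have "insert q Q \<subseteq> end_of (\<phi>(n := v)) (insert n Z) ` insert n (verts F)"
      using old_ends[of "insert n Z" v] by simp
    ultimately show ?thesis unfolding height_one_realisable_def
      by (intro exI[of _ "(insert n (verts F), insert (n, x) (arcs F))"] exI conjI) simp_all
  qed
qed

lemma height_one_realisable_equiv:
  assumes G: "digraph G" and Q: "height_one_realisable G Q" and p: "p \<in> Q"
    and pq: "(p, q) \<in> end_equiv G"
  shows "height_one_realisable G (insert q Q)"
  using pq
proof (induction rule: rtrancl_induct)
  case base
  then show ?case using Q p by (simp add: insert_absorb)
next
  case (step y z)
  then have "height_one_realisable G (insert z (insert y Q))"
    by (intro height_one_realisable_link[OF G step.IH insertI1]) auto
  then show ?case by (rule height_one_realisable_subset) blast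
qed

lemma height_one_realisable_class:
  assumes G: "digraph G" and C: "C \<in> verts (end_graph G)" and Q: "finite Q" "Q \<subseteq> C"
  shows "height_one_realisable G Q"
proof -
  obtain v0 i0 where v0: "v0 \<in> verts G" and C_eq: "C = end_equiv G `` {(v0, i0)}"
    using C unfolding end_graph_def by auto
  \<comment> \<open>grow a tree realising \<open>(v0,i0)\<close> to realise each element of \<open>Q\<close> in turn\<close>
  have "height_one_realisable G (insert (v0, i0) Q)"
    using Q
  proof (induction rule: finite_induct)
    case empty
    then show ?case using height_one_realisable_single[OF v0] by simp
  next
    case (insert q Q')
    then have "height_one_realisable G (insert (v0, i0) Q')" by simp
    moreover have "((v0, i0), q) \<in> end_equiv G" using insert.prems C_eq by auto
    ultimately have "height_one_realisable G (insert q (insert (v0, i0) Q'))"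
      by (intro height_one_realisable_equiv[OF G _ insertI1])
    then show ?case by (simp add: insert_commute)
  qed
  then show ?thesis by (rule height_one_realisable_subset) blast
qed

lemma sproink_graph_hom_iff:
  "sproink_graph T Fu vsel \<rightarrow>\<^sub>h G \<longleftrightarrow>
   (\<exists>\<phi>. (\<forall>u\<in>verts T. is_hom (Fu u) G (\<phi> u)) \<and>
        (\<forall>e\<in>arcs T. \<phi> (fst e) (vsel e (fst e)) = \<phi> (snd e) (vsel e (snd e))))"
proof -
  define R where "R = {((fst e, vsel e (fst e)), (snd e, vsel e (snd e))) | e. e \<in> arcs T}"
  define E where "E = (R \<union> R\<inverse>)\<^sup>*"
  have S_verts: "verts (sproink_graph T Fu vsel) =
      {E `` {(u, x)} | u x. u \<in> verts T \<and> x \<in> verts (Fu u)}"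
   and S_arcs: "arcs (sproink_graph T Fu vsel) =
      {(E `` {(u, x)}, E `` {(u, y)}) | u x y. u \<in> verts T \<and> (x, y) \<in> arcs (Fu u)}"
    unfolding sproink_graph_def sproink_ident_def Let_def E_def R_def by simp_all
  show ?thesis
  proof
    assume "sproink_graph T Fu vsel \<rightarrow>\<^sub>h G"
    then obtain g where g: "is_hom (sproink_graph T Fu vsel) G g" unfolding hom_to_def by blast
    define \<phi> where "\<phi> u x = g (E `` {(u, x)})" for u x
    have "is_hom (Fu u) G (\<phi> u)" if u: "u \<in> verts T" for u
      unfolding is_hom_def
    proof safe
      fix x assume "x \<in> verts (Fu u)"
      then have "E `` {(u, x)} \<in> verts (sproink_graph T Fu vsel)" unfolding S_verts using u by blast
      then show "\<phi> u x \<in> verts G" using g unfolding is_hom_def \<phi>_def by blast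
    next
      fix x y assume "(x, y) \<in> arcs (Fu u)"
      then have "(E `` {(u, x)}, E `` {(u, y)}) \<in> arcs (sproink_graph T Fu vsel)"
        unfolding S_arcs using u by blast
      then show "(\<phi> u x, \<phi> u y) \<in> arcs G" using g unfolding is_hom_def \<phi>_def by auto
    qed
    moreover have "\<phi> (fst e) (vsel e (fst e)) = \<phi> (snd e) (vsel e (snd e))" if "e \<in> arcs T" for e
    proof -
      have "((fst e, vsel e (fst e)), (snd e, vsel e (snd e))) \<in> E"
        using that unfolding E_def R_def by blast
      then show ?thesis unfolding \<phi>_def E_def by (simp add: sym_closure_class_eq)
    qed
    ultimately show "\<exists>\<phi>. (\<forall>u\<in>verts T. is_hom (Fu u) G (\<phi> u)) \<and>
        (\<forall>e\<in>arcs T. \<phi> (fst e) (vsel e (fst e)) = \<phi> (snd e) (vsel e (snd e)))" by blast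
  next
    assume "\<exists>\<phi>. (\<forall>u\<in>verts T. is_hom (Fu u) G (\<phi> u)) \<and>
        (\<forall>e\<in>arcs T. \<phi> (fst e) (vsel e (fst e)) = \<phi> (snd e) (vsel e (snd e)))"
    then obtain \<phi> where \<phi>: "\<And>u. u \<in> verts T \<Longrightarrow> is_hom (Fu u) G (\<phi> u)"
      and glue: "\<And>e. e \<in> arcs T \<Longrightarrow> \<phi> (fst e) (vsel e (fst e)) = \<phi> (snd e) (vsel e (snd e))"
      by blast
    define g where "g C = the_elem ((\<lambda>(u, x). \<phi> u x) ` C)" for C
    have R_inv: "(\<lambda>(u, x). \<phi> u x) a = (\<lambda>(u, x). \<phi> u x) b" if ab: "(a, b) \<in> R" for a b
    proof -
      obtain e where "e \<in> arcs T" "a = (fst e, vsel e (fst e))" "b = (snd e, vsel e (snd e))"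
        using ab unfolding R_def by blast
      then show ?thesis using glue by simp
    qed
    have g_class: "g (E `` {(u, x)}) = \<phi> u x" for u x
      unfolding g_def E_def using R_inv by (subst the_elem_image_class) auto
    have "is_hom (sproink_graph T Fu vsel) G g"
      unfolding is_hom_def
    proof safe
      fix C assume "C \<in> verts (sproink_graph T Fu vsel)"
      then obtain u x where "u \<in> verts T" "x \<in> verts (Fu u)" "C = E `` {(u, x)}"
        unfolding S_verts by blast
      then show "g C \<in> verts G" using is_hom_vert[OF \<phi>] by (simp add: g_class)
    next
      fix C D assume "(C, D) \<in> arcs (sproink_graph T Fu vsel)"
      then obtain u x y where "u \<in> verts T" "(x, y) \<in> arcs (Fu u)"
        "C = E `` {(u, x)}" "D = E `` {(u, y)}"
        unfolding S_arcs by blast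
      then show "(g C, g D) \<in> arcs G" using is_hom_arc[OF \<phi>] by (simp add: g_class)
    qed
    then show "sproink_graph T Fu vsel \<rightarrow>\<^sub>h G" unfolding hom_to_def by blast
  qed
qed

text \<open>A sproink mapping to \<open>G\<close> yields a map of the tree into the end graph: each
  vertex \<open>u\<close> goes to the common class of the ends met by \<open>F(u)\<close>.\<close>
lemma sproink_hom_imp_end_graph_hom:
  assumes T: "digraph T" and S: "sproink_data T Fu Z vsel" "sproink_graph T Fu vsel \<rightarrow>\<^sub>h G"
  shows "T \<rightarrow>\<^sub>h end_graph G"
proof -
  from S(2) obtain \<phi> where \<phi>: "\<And>u. u \<in> verts T \<Longrightarrow> is_hom (Fu u) G (\<phi> u)"
    and glue: "\<And>e. e \<in> arcs T \<Longrightarrow> \<phi> (fst e) (vsel e (fst e)) = \<phi> (snd e) (vsel e (snd e))"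
    unfolding sproink_graph_hom_iff by auto
  have F: "height_le_one (Fu u) (Z u)" if "u \<in> verts T" for u
    using S(1) that unfolding sproink_data_def by auto
  define root where "root u = (SOME x. x \<in> verts (Fu u))" for u
  have root: "root u \<in> verts (Fu u)" if "u \<in> verts T" for u
    using F[OF that] unfolding root_def height_le_one_def oriented_tree_def by (simp add: some_in_eq)
  define h where "h u = end_equiv G `` {end_of (\<phi> u) (Z u) (root u)}" for u
  have h_eq: "h u = end_equiv G `` {end_of (\<phi> u) (Z u) x}" if "u \<in> verts T" "x \<in> verts (Fu u)" for u x
    unfolding h_def
    by (rule sym_closure_class_eq[OF height_one_ends_equiv[OF F \<phi> root that(2)]]) (use that in auto)
  have "is_hom T (end_graph G) h"
    unfolding is_hom_def
  proof safe
    fix u assume u: "u \<in> verts T"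
    then have "\<phi> u (root u) \<in> verts G" using \<phi> root unfolding is_hom_def by blast
    then show "h u \<in> verts (end_graph G)" unfolding h_def end_of_def end_graph_def by auto
  next
    fix u u' assume e: "(u, u') \<in> arcs T"
    then have u: "u \<in> verts T" "u' \<in> verts T" using T unfolding digraph_def by auto
    let ?s = "vsel (u, u') u" and ?s' = "vsel (u, u') u'"
    have s: "?s \<in> verts (Fu u)" "?s \<notin> Z u" and s': "?s' \<in> Z u'"
      using S(1) e unfolding sproink_data_def by auto
    then have s'_F: "?s' \<in> verts (Fu u')" using F[OF u(2)] unfolding height_le_one_def by auto
    have "h u = end_equiv G `` {(\<phi> u ?s, False)}"
      using h_eq[OF u(1) s(1)] s(2) unfolding end_of_def by simp
    moreover have "h u' = end_equiv G `` {(\<phi> u ?s, True)}"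
      using h_eq[OF u(2) s'_F] s' glue[OF e] unfolding end_of_def by simp
    moreover have "\<phi> u ?s \<in> verts G" using \<phi>[OF u(1)] s(1) unfolding is_hom_def by auto
    ultimately show "(h u, h u') \<in> arcs (end_graph G)" unfolding end_graph_def by auto
  qed
  then show ?thesis unfolding hom_to_def by blast
qed

lemma sproink_from_height_one_maps:
  assumes loopless: "\<forall>e\<in>arcs T. fst e \<noteq> snd e"
    and F: "\<And>u. u \<in> verts T \<Longrightarrow> height_le_one (Fu u) (Z u)"
    and \<phi>: "\<And>u. u \<in> verts T \<Longrightarrow> is_hom (Fu u) G (\<phi> u)"
    and tail: "\<And>e. e \<in> arcs T \<Longrightarrow> (ve e, False) \<in> end_of (\<phi> (fst e)) (Z (fst e)) ` verts (Fu (fst e))"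
    and head: "\<And>e. e \<in> arcs T \<Longrightarrow> (ve e, True) \<in> end_of (\<phi> (snd e)) (Z (snd e)) ` verts (Fu (snd e))"
  shows "\<exists>vsel. sproink_data T Fu Z vsel \<and> sproink_graph T Fu vsel \<rightarrow>\<^sub>h G"
proof -
  define vsel where "vsel e u = (SOME x. x \<in> verts (Fu u) \<and> end_of (\<phi> u) (Z u) x = (ve e, u \<noteq> fst e))"
    for e u
  have vsel_tail: "vsel e (fst e) \<in> verts (Fu (fst e)) \<and> vsel e (fst e) \<notin> Z (fst e) \<and>
      \<phi> (fst e) (vsel e (fst e)) = ve e" if e: "e \<in> arcs T" for e
  proof -
    have "\<exists>x. x \<in> verts (Fu (fst e)) \<and> end_of (\<phi> (fst e)) (Z (fst e)) x = (ve e, fst e \<noteq> fst e)"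
      using tail[OF e] by auto
    from someI_ex[OF this] show ?thesis unfolding vsel_def end_of_def by simp
  qed
  have vsel_head: "vsel e (snd e) \<in> Z (snd e) \<and> \<phi> (snd e) (vsel e (snd e)) = ve e"
    if e: "e \<in> arcs T" for e
  proof -
    have ne: "snd e \<noteq> fst e" using loopless e by auto
    moreover obtain x where "x \<in> verts (Fu (snd e))" "end_of (\<phi> (snd e)) (Z (snd e)) x = (ve e, True)"
      using head[OF e] by (metis imageE)
    ultimately have "\<exists>x. x \<in> verts (Fu (snd e)) \<and> end_of (\<phi> (snd e)) (Z (snd e)) x = (ve e, snd e \<noteq> fst e)"
      by auto
    from someI_ex[OF this] show ?thesis using ne unfolding vsel_def end_of_def by simp
  qed
  have "sproink_data T Fu Z vsel"
    unfolding sproink_data_def using F vsel_tail vsel_head by blast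
  moreover have "sproink_graph T Fu vsel \<rightarrow>\<^sub>h G"
  proof -
    have "\<forall>e\<in>arcs T. \<phi> (fst e) (vsel e (fst e)) = \<phi> (snd e) (vsel e (snd e))"
      using vsel_tail vsel_head by simp
    then show ?thesis unfolding sproink_graph_hom_iff using \<phi> by blast
  qed
  ultimately show ?thesis by blast
qed

text \<open>The arc \<open>e\<close> goes to the arc of the end graph given by a vertex \<open>ve e\<close>
  of \<open>G\<close>; the ends of these vertices required at \<open>u\<close> lie in the class \<open>h u\<close>, so a
  single height-one tree \<open>F(u)\<close> meets them all.\<close>
lemma end_graph_hom_imp_sproink_hom:
  assumes G: "digraph G" and T: "digraph T" and loopless: "\<forall>e\<in>arcs T. fst e \<noteq> snd e"
    and h: "is_hom T (end_graph G) h"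
  shows "\<exists>Fu Z vsel. sproink_data T Fu Z vsel \<and> sproink_graph T Fu vsel \<rightarrow>\<^sub>h G"
proof -
  have "\<forall>e\<in>arcs T. \<exists>v. h (fst e) = end_equiv G `` {(v, False)} \<and> h (snd e) = end_equiv G `` {(v, True)}"
  proof
    fix e assume "e \<in> arcs T"
    then have "(h (fst e), h (snd e)) \<in> arcs (end_graph G)" using is_hom_arc[OF h] by simp
    then show "\<exists>v. h (fst e) = end_equiv G `` {(v, False)} \<and> h (snd e) = end_equiv G `` {(v, True)}"
      unfolding end_graph_def by auto
  qed
  then obtain ve where ve: "\<forall>e\<in>arcs T.
      h (fst e) = end_equiv G `` {(ve e, False)} \<and> h (snd e) = end_equiv G `` {(ve e, True)}"
    by (rule bchoice[THEN exE])
  define Q where "Q u = (\<lambda>e. (ve e, False)) ` {e \<in> arcs T. fst e = u} \<union>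
                        (\<lambda>e. (ve e, True)) ` {e \<in> arcs T. snd e = u}" for u
  have "finite (arcs T)" using T finite_subset unfolding digraph_def by blast
  then have Q_fin: "finite (Q u)" for u unfolding Q_def by simp
  have Q_sub: "Q u \<subseteq> h u" for u using ve unfolding Q_def by auto
  have "height_one_realisable G (Q u)" if "u \<in> verts T" for u
    using height_one_realisable_class[OF G is_hom_vert[OF h that] Q_fin Q_sub] .
  then have "\<forall>u\<in>verts T. \<exists>F :: nat digraph. \<exists>Z \<phi>. height_le_one F Z \<and> is_hom F G \<phi> \<and>
      Q u \<subseteq> end_of \<phi> Z ` verts F"
    unfolding height_one_realisable_def by blast
  then obtain Fu :: "_ \<Rightarrow> nat digraph" where "\<forall>u\<in>verts T. \<exists>Z \<phi>. height_le_one (Fu u) Z \<and>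
      is_hom (Fu u) G \<phi> \<and> Q u \<subseteq> end_of \<phi> Z ` verts (Fu u)"
    by (rule bchoice[THEN exE])
  then obtain Z where "\<forall>u\<in>verts T. \<exists>\<phi>. height_le_one (Fu u) (Z u) \<and>
      is_hom (Fu u) G \<phi> \<and> Q u \<subseteq> end_of \<phi> (Z u) ` verts (Fu u)"
    by (rule bchoice[THEN exE])
  then obtain \<phi> where "\<forall>u\<in>verts T. height_le_one (Fu u) (Z u) \<and>
      is_hom (Fu u) G (\<phi> u) \<and> Q u \<subseteq> end_of (\<phi> u) (Z u) ` verts (Fu u)"
    by (rule bchoice[THEN exE])
  then have F: "\<And>u. u \<in> verts T \<Longrightarrow> height_le_one (Fu u) (Z u)"
    and \<phi>: "\<And>u. u \<in> verts T \<Longrightarrow> is_hom (Fu u) G (\<phi> u)"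
    and Q_met: "\<And>u. u \<in> verts T \<Longrightarrow> Q u \<subseteq> end_of (\<phi> u) (Z u) ` verts (Fu u)"
    by auto
  have tail: "(ve e, False) \<in> end_of (\<phi> (fst e)) (Z (fst e)) ` verts (Fu (fst e))"
    and head: "(ve e, True) \<in> end_of (\<phi> (snd e)) (Z (snd e)) ` verts (Fu (snd e))"
    if e: "e \<in> arcs T" for e
  proof -
    have "fst e \<in> verts T" "snd e \<in> verts T" using T e unfolding digraph_def by auto
    moreover have "(ve e, False) \<in> Q (fst e)" "(ve e, True) \<in> Q (snd e)"
      using e unfolding Q_def by auto
    ultimately show "(ve e, False) \<in> end_of (\<phi> (fst e)) (Z (fst e)) ` verts (Fu (fst e))"
      "(ve e, True) \<in> end_of (\<phi> (snd e)) (Z (snd e)) ` verts (Fu (snd e))"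
      using Q_met by blast+
  qed
  show ?thesis using sproink_from_height_one_maps[OF loopless F \<phi> tail head] by blast
qed

lemma sproink_hom_iff_end_graph_hom:
  assumes G: "digraph G" and T: "digraph T" and loopless: "\<forall>e\<in>arcs T. fst e \<noteq> snd e"
  shows "(\<exists>S\<in>Sproink T. S \<rightarrow>\<^sub>h G) \<longleftrightarrow> T \<rightarrow>\<^sub>h end_graph G"
proof
  assume "\<exists>S\<in>Sproink T. S \<rightarrow>\<^sub>h G"
  then obtain Fu Z vsel where "sproink_data T Fu Z vsel" "sproink_graph T Fu vsel \<rightarrow>\<^sub>h G"
    unfolding Sproink_def by blast
  then show "T \<rightarrow>\<^sub>h end_graph G" by (rule sproink_hom_imp_end_graph_hom[OF T])
next
  assume "T \<rightarrow>\<^sub>h end_graph G"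
  then obtain h where "is_hom T (end_graph G) h" unfolding hom_to_def by blast
  from end_graph_hom_imp_sproink_hom[OF G T loopless this]
  show "\<exists>S\<in>Sproink T. S \<rightarrow>\<^sub>h G" unfolding Sproink_def by blast
qed

theorem theorem2p3:
  fixes \<F> :: "'t digraph set" and H :: "'h digraph"
  assumes "digraph H"
    and "\<forall>T\<in>\<F>. oriented_tree T"
    and "complete_obstructions \<F> H"
  shows "complete_obstructions (\<Union>T\<in>\<F>. Sproink T) (arc_graph H)"
  unfolding complete_obstructions_def
proof (intro allI impI)
  fix G :: "nat digraph" assume G: "digraph G"
  have L: "digraph (end_graph G)" using G by (rule end_graph_digraph)
  then obtain \<iota> :: "(nat \<times> bool) set \<Rightarrow> nat" where \<iota>: "inj_on \<iota> (verts (end_graph G))"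
    unfolding digraph_def using finite_imp_inj_to_nat_seg by blast
  let ?N = "relabel \<iota> (end_graph G)"
  have trees: "digraph T" "\<forall>e\<in>arcs T. fst e \<noteq> snd e" if "T \<in> \<F>" for T
    using assms(2) that unfolding oriented_tree_def by (auto simp: case_prod_unfold)
  have "G \<rightarrow>\<^sub>h arc_graph H \<longleftrightarrow> end_graph G \<rightarrow>\<^sub>h H" by (rule arc_graph_adjunction[OF assms(1) G])
  also have "\<dots> \<longleftrightarrow> ?N \<rightarrow>\<^sub>h H" by (rule relabel_hom_to_iff[OF L \<iota>, symmetric])
  also have "\<dots> \<longleftrightarrow> \<not> (\<exists>T\<in>\<F>. T \<rightarrow>\<^sub>h ?N)"
    using assms(3) relabel_digraph[OF L] unfolding complete_obstructions_def by blast
  also have "\<dots> \<longleftrightarrow> \<not> (\<exists>T\<in>\<F>. T \<rightarrow>\<^sub>h end_graph G)" by (simp add: hom_to_relabel_iff[OF L \<iota>])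
  also have "\<dots> \<longleftrightarrow> \<not> (\<exists>S\<in>(\<Union>T\<in>\<F>. Sproink T). S \<rightarrow>\<^sub>h G)"
    using sproink_hom_iff_end_graph_hom[OF G trees] by blast
  finally show "G \<rightarrow>\<^sub>h arc_graph H \<longleftrightarrow> \<not> (\<exists>F\<in>(\<Union>T\<in>\<F>. Sproink T). F \<rightarrow>\<^sub>h G)" .
qed

end
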